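(* Let $T\in L_{aut}(\mathcal B)$ be a shifted hyperbolic operator with transition subspace $E_0=E^-\cap T^{-1}(E^+)$. If $E_0$ is separable (in particular, if $E_0$ is finite dimensional), then $\overline{B(T)}$ is separable.
   Context: $\mathcal B$ is a Banach space. $T$ is generalized hyperbolic if there is a decomposition $\mathcal B=E^-\oplus E^+$ into complementary closed subspaces with $T(E^+)\subset E^+$, $T^{-1}(E^-)\subset E^-$, and $T|_{E^+}$, $T^{-1}|_{E^-}$ uniform contractions; $T$ is shifted hyperbolic if in addition $E_0=E^-\cap T^{-1}(E^+)\ne\{0\}$. $B(T)$ is the set of $x$ for which there exist $K>0$ and strictly increasing sequences of positive integers $(k_n),(m_n)$ with $|T^{k_n}x|<K$ and $|T^{-m_n}x|<K$. *)

theory Defs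
  imports "HOL-Analysis.Analysis"
begin

definition is_aut :: "('a::banach \<Rightarrow> 'a) \<Rightarrow> bool" where
  "is_aut T \<longleftrightarrow> bounded_linear T \<and> bij T \<and> bounded_linear (inv T)"

definition uniform_contraction_on :: "'a set \<Rightarrow> ('a::real_normed_vector \<Rightarrow> 'a) \<Rightarrow> bool" where
  "uniform_contraction_on E S \<longleftrightarrow>
     (\<exists>C t. C > 0 \<and> 0 < t \<and> t < 1 \<and>
        (\<forall>n. \<forall>x\<in>E. norm ((S ^^ n) x) \<le> C * t ^ n * norm x))"

definition gen_hyperbolic_split :: "('a::banach \<Rightarrow> 'a) \<Rightarrow> 'a set \<Rightarrow> 'a set \<Rightarrow> bool" where
  "gen_hyperbolic_split T Em Ep \<longleftrightarrow>
     subspace Em \<and> subspace Ep \<and> closed Em \<and> closed Ep \<and>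
     Em \<inter> Ep = {0} \<and> Em + Ep = UNIV \<and>
     T ` Ep \<subseteq> Ep \<and> inv T ` Em \<subseteq> Em \<and>
     uniform_contraction_on Ep T \<and> uniform_contraction_on Em (inv T)"

definition transition_subspace :: "('a \<Rightarrow> 'a) \<Rightarrow> 'a set \<Rightarrow> 'a set \<Rightarrow> 'a set" where
  "transition_subspace T Em Ep = Em \<inter> T -` Ep"

definition shifted_hyperbolic_split :: "('a::banach \<Rightarrow> 'a) \<Rightarrow> 'a set \<Rightarrow> 'a set \<Rightarrow> bool" where
  "shifted_hyperbolic_split T Em Ep \<longleftrightarrow>
     gen_hyperbolic_split T Em Ep \<and> transition_subspace T Em Ep \<noteq> {0}"

definition bset_of :: "('a::real_normed_vector \<Rightarrow> 'a) \<Rightarrow> 'a set" where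
  "bset_of T = {x. \<exists>K>0. \<exists>(k::nat \<Rightarrow> nat) (m::nat \<Rightarrow> nat).
      strict_mono k \<and> strict_mono m \<and> k 0 > 0 \<and> m 0 > 0 \<and>
      (\<forall>n. norm ((T ^^ k n) x) < K) \<and> (\<forall>n. norm ((inv T ^^ m n) x) < K)}"

end

theory Submission
  imports Defs
begin

text \<open>Let the trapped set \<open>W(k,m)\<close> consist of the points \<open>y\<close> with \<open>T\<^sup>k y \<in> E\<^sup>+\<close> and
  \<open>T\<^sup>-\<^sup>m y \<in> E\<^sup>-\<close>. By the contraction estimates every such point lies in \<open>B(T)\<close>. Conversely,
  if \<open>\<parallel>T\<^sup>a x\<parallel>\<close> and \<open>\<parallel>T\<^sup>-\<^sup>b x\<parallel>\<close> are below \<open>K\<close>, split \<open>T\<^sup>a x\<close> and \<open>T\<^sup>-\<^sup>b x\<close> along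
  \<open>E\<^sup>- \<oplus> E\<^sup>+\<close> (the projections are bounded by a Baire category argument) and subtract from \<open>x\<close>
  the pulled-back components lying in the wrong subspace: this moves \<open>x\<close> into \<open>W(a,b)\<close>, and
  the contractions make the correction of size \<open>O(K t\<^sup>a + K t\<^sup>b)\<close>. Hence \<open>B(T)\<close> and
  \<open>\<Union> W(k,m)\<close> have the same closure. Finally \<open>W(0,0) = {0}\<close>, \<open>W(0,N+1) = T W(0,N) + T E\<^sub>0\<close>
  and \<open>W(k,m) = T\<^sup>-\<^sup>k W(0,m+k)\<close>, so all \<open>W(k,m)\<close> are separable when \<open>E\<^sub>0\<close> is.\<close>

definition separable_set :: "'a::topological_space set \<Rightarrow> bool" where
  "separable_set A \<longleftrightarrow> (\<exists>D. countable D \<and> D \<subseteq> A \<and> A \<subseteq> closure D)"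

lemma separable_space_top_of_set_iff:
  "separable_space (top_of_set A) \<longleftrightarrow> separable_set A"
proof -
  have "top_of_set A closure_of C = A \<longleftrightarrow> A \<subseteq> closure C" if "C \<subseteq> A" for C
    using that by (auto simp: closure_of_subtopology_open)
  then show ?thesis
    unfolding separable_space_def separable_set_def by auto
qed

lemma separable_set_closure:
  assumes "separable_set A"
  shows "separable_set (closure A)"
proof -
  obtain D where "countable D" "D \<subseteq> A" "A \<subseteq> closure D"
    using assms by (auto simp: separable_set_def)
  then show ?thesis
    unfolding separable_set_def
    by (metis closure_minimal closed_closure closure_subset order_trans)
qed

lemma separable_set_continuous_image:
  assumes "separable_set A" "continuous_on A f"
  shows "separable_set (f ` A)"
proof -
  obtain D where D: "countable D" "D \<subseteq> A" "A \<subseteq> closure D"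
    using assms(1) by (auto simp: separable_set_def)
  have "f ` (top_of_set A closure_of D) \<subseteq> euclidean closure_of f ` D"
    using assms(2) by (intro continuous_map_image_closure_subset) simp
  moreover have "top_of_set A closure_of D = A"
    using D by (auto simp: closure_of_subtopology_open)
  ultimately show ?thesis
    unfolding separable_set_def using D by (intro exI[of _ "f ` D"]) auto
qed

lemma separable_set_sums:
  fixes A B :: "'a::real_normed_vector set"
  assumes "separable_set A" "separable_set B"
  shows "separable_set (A + B)"
proof -
  obtain D where D: "countable D" "D \<subseteq> A" "A \<subseteq> closure D"
    using assms(1) by (auto simp: separable_set_def)
  obtain E where E: "countable E" "E \<subseteq> B" "B \<subseteq> closure E"
    using assms(2) by (auto simp: separable_set_def)
  have "countable (D + E)"
    using D E by (simp add: set_plus_image)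
  moreover have "A + B \<subseteq> closure (D + E)"
    using set_plus_mono2[OF D(3) E(3)] closure_sum[of D E] by blast
  ultimately show ?thesis
    unfolding separable_set_def using D E by (meson set_plus_mono2 order_refl)
qed

lemma separable_set_UN:
  assumes "countable I" "\<And>i. i \<in> I \<Longrightarrow> separable_set (A i)"
  shows "separable_set (\<Union>i\<in>I. A i)"
proof -
  obtain D where D: "\<And>i. i \<in> I \<Longrightarrow> countable (D i) \<and> D i \<subseteq> A i \<and> A i \<subseteq> closure (D i)"
    using assms(2) unfolding separable_set_def by metis
  have "A i \<subseteq> closure (\<Union>i\<in>I. D i)" if "i \<in> I" for i
    using D[OF that] closure_mono[of "D i" "\<Union>i\<in>I. D i"] that by blast
  then show ?thesis
    unfolding separable_set_def using D assms(1)
    by (intro exI[of _ "\<Union>i\<in>I. D i"]) blast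
qed

lemma separable_set_singleton: "separable_set {a}"
  unfolding separable_set_def using closure_subset by blast

lemma sums_in_closed_subspace:
  assumes "subspace E" "closed E" "f sums s" "\<And>j. f j \<in> E"
  shows "s \<in> E"
proof -
  have "(\<Sum>j<N. f j) \<in> E" for N
    using assms(1,4) by (simp add: subspace_sum)
  then show ?thesis
    by (rule closed_sequentially[OF assms(2) _ assms(3)[unfolded sums_def]])
qed

lemma halving_residuals:
  fixes P :: "'a::real_normed_vector \<Rightarrow> 'a"
  assumes halves: "\<And>y. norm (y - P y) \<le> norm y / 2"
  obtains r where "\<And>j. norm (r j) \<le> (1/2)^j * norm x" "(\<lambda>j. P (r j)) sums x"
proof -
  define r where "r = rec_nat x (\<lambda>_ y. y - P y)"
  have r0: "r 0 = x" and rSuc: "\<And>j. r (Suc j) = r j - P (r j)"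
    by (simp_all add: r_def)
  have r_le: "norm (r j) \<le> (1/2)^j * norm x" for j
  proof (induction j)
    case (Suc j)
    then show ?case using halves[of "r j"] by (simp add: rSuc)
  qed (simp add: r0)
  have "(\<lambda>j. (1/2::real)^j * norm x) \<longlonglongrightarrow> 0"
    by (rule tendsto_mult_left_zero, rule LIMSEQ_power_zero) simp
  then have "r \<longlonglongrightarrow> 0"
    by (rule Lim_null_comparison[OF always_eventually, rotated]) (use r_le in simp)
  from telescope_sums'[OF this] have "(\<lambda>j. P (r j)) sums x"
    by (simp add: rSuc r0)
  with r_le show ?thesis
    by (rule that)
qed

lemma decomposition_from_approximate_decomposition:
  fixes Em Ep :: "'a::banach set"
  assumes "subspace Em" "subspace Ep" "closed Em" "closed Ep" "c \<ge> 0"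
    and approx: "\<And>y. \<exists>u\<in>Em. \<exists>s\<in>Ep. norm u \<le> c * norm y \<and> norm (y - (u + s)) \<le> norm y / 2"
  shows "\<exists>u\<in>Em. \<exists>s\<in>Ep. x = u + s \<and> norm u \<le> 2 * c * norm x"
proof -
  from approx have "\<forall>y. \<exists>u s. u \<in> Em \<and> s \<in> Ep \<and> norm u \<le> c * norm y
      \<and> norm (y - (u + s)) \<le> norm y / 2"
    by blast
  then obtain U S where US: "\<And>y. U y \<in> Em \<and> S y \<in> Ep \<and> norm (U y) \<le> c * norm y
      \<and> norm (y - (U y + S y)) \<le> norm y / 2"
    by metis
  then obtain r where r_le: "\<And>j. norm (r j) \<le> (1/2)^j * norm x"
    and sums_x: "(\<lambda>j. U (r j) + S (r j)) sums x"
    using halving_residuals[of "\<lambda>y. U y + S y" x] by blast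
  have Ur_le: "norm (U (r j)) \<le> c * norm x * (1/2)^j" for j
    using US[of "r j"] mult_left_mono[OF r_le[of j] \<open>c \<ge> 0\<close>] by (simp add: algebra_simps)
  have geometric: "summable (\<lambda>j. c * norm x * (1/2::real)^j)"
    by (simp add: summable_geometric)
  have norm_summable: "summable (\<lambda>j. norm (U (r j)))"
    using Ur_le by (intro summable_comparison_test[OF _ geometric]) auto
  define u where "u = (\<Sum>j. U (r j))"
  have u_sums: "(\<lambda>j. U (r j)) sums u"
    unfolding u_def using summable_norm_cancel[OF norm_summable] by (rule summable_sums)
  from sums_diff[OF sums_x u_sums] have "(\<lambda>j. S (r j)) sums (x - u)"
    by simp
  then have "x - u \<in> Ep"
    by (rule sums_in_closed_subspace[OF assms(2,4)]) (use US in blast)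
  moreover have "u \<in> Em"
    by (rule sums_in_closed_subspace[OF assms(1,3) u_sums]) (use US in blast)
  moreover have "norm u \<le> 2 * c * norm x"
  proof -
    have "norm u \<le> (\<Sum>j. norm (U (r j)))"
      unfolding u_def using summable_norm[OF norm_summable] .
    also have "\<dots> \<le> (\<Sum>j. c * norm x * (1/2)^j)"
      using Ur_le norm_summable geometric by (rule suminf_le)
    also have "\<dots> = 2 * c * norm x"
      by (simp add: suminf_mult suminf_geometric summable_geometric)
    finally show ?thesis .
  qed
  ultimately show ?thesis
    by (metis diff_add_cancel add.commute)
qed

lemma decompositions_somewhere_dense:
  fixes Em Ep :: "'a::banach set"
  assumes "Em + Ep = UNIV"
  obtains n x0 r where "r > 0"
    "ball x0 r \<subseteq> closure {u + s | u s. u \<in> Em \<and> s \<in> Ep \<and> norm u \<le> real n}"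
proof -
  define F where "F n = closure {u + s | u s. u \<in> Em \<and> s \<in> Ep \<and> norm u \<le> real n}" for n :: nat
  have "x \<in> (\<Union>n. F n)" for x
  proof -
    obtain u s where "u \<in> Em" "s \<in> Ep" "x = u + s"
      using assms by (metis UNIV_I set_plus_elim)
    moreover obtain n :: nat where "norm u \<le> real n"
      using real_arch_simple by blast
    ultimately have "x \<in> F n"
      unfolding F_def by (intro closure_subset[THEN subsetD]) blast
    then show ?thesis
      by blast
  qed
  then have cover: "(\<Union>n. F n) = UNIV"
    by blast
  have closed_F: "closedin euclidean (F n)" for n
    by (simp add: F_def flip: closed_closedin)
  have "\<exists>n. interior (F n) \<noteq> {}"
  proof (rule ccontr)
    assume nowhere_dense: "\<nexists>n. interior (F n) \<noteq> {}"
    have "euclidean interior_of \<Union>(range F) = {}"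
      by (rule Baire_category_alt)
        (use closed_F nowhere_dense in \<open>auto simp: completely_metrizable_space_euclidean\<close>)
    with cover show False
      by simp
  qed
  then obtain n where "interior (F n) \<noteq> {}"
    by blast
  then obtain x0 r where "r > 0" "ball x0 r \<subseteq> F n"
    using mem_interior by blast
  then show ?thesis
    using that[of r x0 n] by (simp add: F_def)
qed

lemma approximate_decomposition_near_zero:
  fixes Em Ep :: "'a::banach set"
  assumes "subspace Em" "subspace Ep" "Em + Ep = UNIV"
  obtains r n where "r > 0"
    "\<And>y \<epsilon>. norm y < r \<Longrightarrow> \<epsilon> > 0 \<Longrightarrow> \<exists>u\<in>Em. \<exists>s\<in>Ep. norm u \<le> real n \<and> norm (y - (u + s)) < \<epsilon>"
proof -
  obtain n x0 r where "r > 0" and ball: "ball x0 r \<subseteq> closure {u + s | u s. u \<in> Em \<and> s \<in> Ep \<and> norm u \<le> real n}"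
    using decompositions_somewhere_dense[OF assms(3)] by blast
  define P where "P = {u + s | u s. u \<in> Em \<and> s \<in> Ep \<and> norm u \<le> real n}"
  have ball: "ball x0 r \<subseteq> closure P"
    using ball by (simp add: P_def)
  \<comment> \<open>Subtracting approximations of x0 and of x0 + y approximates y.\<close>
  have near: "\<exists>u\<in>Em. \<exists>s\<in>Ep. norm u \<le> real (2 * n) \<and> norm (y - (u + s)) < \<epsilon>"
    if "norm y < r" "\<epsilon> > 0" for y \<epsilon>
  proof -
    have "x0 + y \<in> ball x0 r" "x0 \<in> ball x0 r"
      using that \<open>r > 0\<close> by (auto simp: dist_norm)
    then have "x0 + y \<in> closure P" "x0 \<in> closure P"
      using ball by auto
    then obtain p q where "p \<in> P" "dist p (x0 + y) < \<epsilon>/2" "q \<in> P" "dist q x0 < \<epsilon>/2"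
      using \<open>\<epsilon> > 0\<close> unfolding closure_approachable by (meson half_gt_zero)
    then obtain u1 s1 u2 s2 where
      us: "u1 \<in> Em" "s1 \<in> Ep" "norm u1 \<le> real n" "dist (u1 + s1) (x0 + y) < \<epsilon>/2"
          "u2 \<in> Em" "s2 \<in> Ep" "norm u2 \<le> real n" "dist (u2 + s2) x0 < \<epsilon>/2"
      unfolding P_def by blast
    show ?thesis
    proof (intro bexI conjI)
      show "norm (u1 - u2) \<le> real (2 * n)"
        using us norm_triangle_ineq4[of u1 u2] unfolding of_nat_mult by linarith
      have "y - ((u1 - u2) + (s1 - s2)) = (x0 + y - (u1 + s1)) - (x0 - (u2 + s2))"
        by (simp add: algebra_simps)
      also have "norm \<dots> < \<epsilon>"
        using us norm_triangle_ineq4[of "x0 + y - (u1 + s1)" "x0 - (u2 + s2)"]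
        by (simp add: dist_norm norm_minus_commute)
      finally show "norm (y - ((u1 - u2) + (s1 - s2))) < \<epsilon>" .
      show "u1 - u2 \<in> Em" "s1 - s2 \<in> Ep"
        using us assms(1,2) by (simp_all add: subspace_diff)
    qed
  qed
  show ?thesis
    by (rule that[OF \<open>r > 0\<close> near])
qed

lemma approximate_bounded_decomposition:
  fixes Em Ep :: "'a::banach set"
  assumes "subspace Em" "subspace Ep" "Em + Ep = UNIV"
  obtains c where "c \<ge> 0"
    "\<And>y. \<exists>u\<in>Em. \<exists>s\<in>Ep. norm u \<le> c * norm y \<and> norm (y - (u + s)) \<le> norm y / 2"
proof -
  obtain r n where "r > 0" and near_zero:
    "\<And>y \<epsilon>. norm y < r \<Longrightarrow> \<epsilon> > 0 \<Longrightarrow> \<exists>u\<in>Em. \<exists>s\<in>Ep. norm u \<le> real n \<and> norm (y - (u + s)) < \<epsilon>"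
    using approximate_decomposition_near_zero[OF assms] by metis
  \<comment> \<open>Rescale y to norm r/2, approximate it to within r/4 and scale back.\<close>
  have approx: "\<exists>u\<in>Em. \<exists>s\<in>Ep. norm u \<le> 2 * real n / r * norm y \<and> norm (y - (u + s)) \<le> norm y / 2" for y
  proof (cases "y = 0")
    case True
    then show ?thesis
      using assms(1,2) by (auto intro!: bexI[of _ 0] simp: subspace_0)
  next
    case False
    define l where "l = r / (2 * norm y)"
    have "l > 0"
      using False \<open>r > 0\<close> by (simp add: l_def)
    have "norm (l *\<^sub>R y) < r"
      using False \<open>r > 0\<close> by (simp add: l_def)
    then obtain u s where us: "u \<in> Em" "s \<in> Ep" "norm u \<le> real n" "norm (l *\<^sub>R y - (u + s)) < r/4"
      using near_zero[of "l *\<^sub>R y" "r / 4"] \<open>r > 0\<close> by auto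
    show ?thesis
    proof (intro bexI conjI)
      have "norm (u /\<^sub>R l) \<le> real n / l"
        using us(3) \<open>l > 0\<close> by (simp add: divide_inverse_commute divide_right_mono)
      also have "\<dots> = 2 * real n / r * norm y"
        using False by (simp add: l_def)
      finally show "norm (u /\<^sub>R l) \<le> 2 * real n / r * norm y" .
      have "y - (u /\<^sub>R l + s /\<^sub>R l) = (l *\<^sub>R y - (u + s)) /\<^sub>R l"
        using \<open>l > 0\<close> by (simp add: algebra_simps)
      then have "norm (y - (u /\<^sub>R l + s /\<^sub>R l)) = norm (l *\<^sub>R y - (u + s)) / l"
        using \<open>l > 0\<close> by (simp add: divide_inverse_commute)
      also have "\<dots> \<le> (r / 4) / l"
        using divide_right_mono[OF less_imp_le[OF us(4)], of l] \<open>l > 0\<close> by simp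
      also have "\<dots> = norm y / 2"
        using False \<open>r > 0\<close> by (simp add: l_def field_simps)
      finally show "norm (y - (u /\<^sub>R l + s /\<^sub>R l)) \<le> norm y / 2" .
      show "u /\<^sub>R l \<in> Em" "s /\<^sub>R l \<in> Ep"
        using us assms(1,2) by (simp_all add: subspace_scale)
    qed
  qed
  show ?thesis
    by (rule that[OF _ approx]) (use \<open>r > 0\<close> in simp)
qed

lemma bounded_decomposition:
  fixes Em Ep :: "'a::banach set"
  assumes "subspace Em" "subspace Ep" "closed Em" "closed Ep" "Em + Ep = UNIV"
  obtains M where "M > 0"
    "\<And>x. \<exists>u\<in>Em. \<exists>s\<in>Ep. x = u + s \<and> norm u \<le> M * norm x \<and> norm s \<le> M * norm x"
proof -
  obtain c where "c \<ge> 0"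
    "\<And>y. \<exists>u\<in>Em. \<exists>s\<in>Ep. norm u \<le> c * norm y \<and> norm (y - (u + s)) \<le> norm y / 2"
    using approximate_bounded_decomposition[OF assms(1,2,5)] by blast
  then have decomp: "\<exists>u\<in>Em. \<exists>s\<in>Ep. x = u + s \<and> norm u \<le> 2 * c * norm x" for x
    using decomposition_from_approximate_decomposition[OF assms(1-4)] by blast
  have "\<exists>u\<in>Em. \<exists>s\<in>Ep. x = u + s \<and> norm u \<le> (2 * c + 1) * norm x \<and> norm s \<le> (2 * c + 1) * norm x" for x
  proof -
    obtain u s where us: "u \<in> Em" "s \<in> Ep" "x = u + s" "norm u \<le> 2 * c * norm x"
      using decomp by blast
    have "norm u \<le> (2 * c + 1) * norm x"
      using us(4) norm_ge_zero[of x] unfolding distrib_right mult_1 by linarith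
    moreover have "s = x - u"
      using us(3) by simp
    then have "norm s \<le> (2 * c + 1) * norm x"
      using us(4) norm_triangle_ineq4[of x u] unfolding distrib_right mult_1 \<open>s = x - u\<close>
      by linarith
    ultimately show ?thesis
      using us by blast
  qed
  then show ?thesis
    by (rule that[rotated]) (use \<open>c \<ge> 0\<close> in simp)
qed

lemma bounded_linear_funpow:
  fixes f :: "'a::real_normed_vector \<Rightarrow> 'a"
  assumes "bounded_linear f"
  shows "bounded_linear (f ^^ n)"
proof (induction n)
  case 0
  have "f ^^ 0 = (\<lambda>x. x)"
    by (simp add: id_def)
  then show ?case
    by (simp only: bounded_linear_ident)
next
  case (Suc n)
  have "f ^^ Suc n = (\<lambda>x. f ((f ^^ n) x))"
    by auto
  then show ?case
    using bounded_linear_compose[OF assms Suc] by simp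
qed

lemma funpow_mem:
  assumes "f ` A \<subseteq> A" "x \<in> A"
  shows "(f ^^ n) x \<in> A"
  using assms by (induction n) auto

definition trapped_set :: "('a \<Rightarrow> 'a) \<Rightarrow> 'a set \<Rightarrow> 'a set \<Rightarrow> nat \<Rightarrow> nat \<Rightarrow> 'a set" where
  "trapped_set T Em Ep k m = {y. (T ^^ k) y \<in> Ep \<and> (inv T ^^ m) y \<in> Em}"

locale hyperbolic_automorphism =
  fixes T :: "'a::banach \<Rightarrow> 'a" and Em Ep :: "'a set"
  assumes aut: "is_aut T" and split: "gen_hyperbolic_split T Em Ep"
begin

abbreviation "S \<equiv> inv T"
abbreviation "E0 \<equiv> transition_subspace T Em Ep"

lemma bounded_linear_automorphism: "bounded_linear T" "bounded_linear S"
  using aut by (simp_all add: is_aut_def)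

lemma inv_automorphism: "S (T x) = x" "T (S x) = x"
  using aut by (simp_all add: is_aut_def bij_is_inj bij_is_surj surj_f_inv_f)

lemma bounded_linear_iterates: "bounded_linear (T ^^ n)" "bounded_linear (S ^^ n)"
  using bounded_linear_automorphism by (simp_all add: bounded_linear_funpow)

lemma linear_iterates: "linear (T ^^ n)" "linear (S ^^ n)"
  using bounded_linear_iterates bounded_linear.linear by blast+

lemma iterates_cancel: "(S ^^ n) ((T ^^ n) x) = x" "(T ^^ n) ((S ^^ n) x) = x"
  using aut inv_fn_o_fn_is_id[of T n] fn_o_inv_fn_is_id[of T n]
  by (auto simp: is_aut_def fun_eq_iff)

lemma subspaces: "subspace Em" "subspace Ep" "closed Em" "closed Ep" "Em \<inter> Ep = {0}" "Em + Ep = UNIV"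
  using split by (simp_all add: gen_hyperbolic_split_def)

lemma iterates_mem: "x \<in> Ep \<Longrightarrow> (T ^^ n) x \<in> Ep" "x \<in> Em \<Longrightarrow> (S ^^ n) x \<in> Em"
  using split by (simp_all add: gen_hyperbolic_split_def funpow_mem)

lemma trapped_set_0_0: "trapped_set T Em Ep 0 0 = {0}"
  using subspaces(5) by (auto simp: trapped_set_def)

lemma trapped_set_0_Suc:
  "trapped_set T Em Ep 0 (Suc N) = T ` trapped_set T Em Ep 0 N + T ` E0"
proof (intro equalityI subsetI)
  fix z assume "z \<in> trapped_set T Em Ep 0 (Suc N)"
  then have z: "z \<in> Ep" "(S ^^ N) (S z) \<in> Em"
    by (simp_all add: trapped_set_def funpow_swap1)
  obtain e s where es: "e \<in> Em" "s \<in> Ep" "S z = e + s"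
    using subspaces(6) by (metis UNIV_I set_plus_elim)
  have z_eq: "z = T e + T s"
    using inv_automorphism(2)[of z] linear_add[OF bounded_linear.linear[OF bounded_linear_automorphism(1)]] es(3)
    by simp
  moreover have "T s \<in> Ep"
    using iterates_mem(1)[OF es(2), of 1] by simp
  ultimately have "T e \<in> Ep"
    using z(1) subspaces(2) by (metis add_diff_cancel_right' subspace_diff)
  then have "e \<in> E0"
    using es(1) by (simp add: transition_subspace_def)
  have "(S ^^ N) s = (S ^^ N) (S z) - (S ^^ N) e"
    using es(3) linear_add[OF linear_iterates(2)] by simp
  then have "(S ^^ N) s \<in> Em"
    using z(2) iterates_mem(2)[OF es(1)] subspaces(1) by (simp add: subspace_diff)
  then have "s \<in> trapped_set T Em Ep 0 N"
    using es(2) by (simp add: trapped_set_def)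
  then show "z \<in> T ` trapped_set T Em Ep 0 N + T ` E0"
    using z_eq \<open>e \<in> E0\<close> by (metis add.commute imageI set_plus_intro)
next
  fix w assume "w \<in> T ` trapped_set T Em Ep 0 N + T ` E0"
  then obtain s e where se: "s \<in> trapped_set T Em Ep 0 N" "e \<in> E0" "w = T s + T e"
    by (auto elim!: set_plus_elim)
  have "T s \<in> Ep" "T e \<in> Ep"
    using se(1,2) iterates_mem(1)[of s 1] by (auto simp: trapped_set_def transition_subspace_def)
  then have "w \<in> Ep"
    using se(3) subspaces(2) by (simp add: subspace_add)
  have "S w = s + e"
    using se(3) inv_automorphism(1) linear_add[OF bounded_linear.linear[OF bounded_linear_automorphism(1)]]
    by metis
  then have "(S ^^ N) (S w) = (S ^^ N) s + (S ^^ N) e"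
    using linear_add[OF linear_iterates(2)] by simp
  moreover have "(S ^^ N) s \<in> Em" "(S ^^ N) e \<in> Em"
    using se(1,2) iterates_mem(2) by (auto simp: trapped_set_def transition_subspace_def)
  ultimately have "(S ^^ Suc N) w \<in> Em"
    using subspaces(1) by (simp add: subspace_add funpow_swap1)
  with \<open>w \<in> Ep\<close> show "w \<in> trapped_set T Em Ep 0 (Suc N)"
    by (simp add: trapped_set_def)
qed

lemma trapped_set_eq_image: "trapped_set T Em Ep k m = (S ^^ k) ` trapped_set T Em Ep 0 (m + k)"
proof (intro equalityI subsetI)
  fix y assume "y \<in> trapped_set T Em Ep k m"
  moreover have "(S ^^ (m + k)) ((T ^^ k) y) = (S ^^ m) y"
    using iterates_cancel(1) by (simp add: funpow_add)
  ultimately have "(T ^^ k) y \<in> trapped_set T Em Ep 0 (m + k)"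
    by (simp add: trapped_set_def)
  then show "y \<in> (S ^^ k) ` trapped_set T Em Ep 0 (m + k)"
    by (metis iterates_cancel(1) image_eqI)
next
  fix y assume "y \<in> (S ^^ k) ` trapped_set T Em Ep 0 (m + k)"
  then obtain z where "z \<in> trapped_set T Em Ep 0 (m + k)" "y = (S ^^ k) z"
    by blast
  then show "y \<in> trapped_set T Em Ep k m"
    by (simp add: trapped_set_def iterates_cancel(2) funpow_add)
qed

lemma separable_trapped_set:
  assumes "separable_set E0"
  shows "separable_set (trapped_set T Em Ep k m)"
proof -
  have "separable_set (trapped_set T Em Ep 0 N)" for N
  proof (induction N)
    case 0
    then show ?case by (simp add: trapped_set_0_0 separable_set_singleton)
  next
    case (Suc N)
    have "separable_set (T ` trapped_set T Em Ep 0 N)" "separable_set (T ` E0)"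
      using Suc assms linear_continuous_on[OF bounded_linear_automorphism(1)]
      by (simp_all add: separable_set_continuous_image)
    then show ?case
      unfolding trapped_set_0_Suc by (rule separable_set_sums)
  qed
  then show ?thesis
    unfolding trapped_set_eq_image[of k m]
    using linear_continuous_on[OF bounded_linear_iterates(2)] by (simp add: separable_set_continuous_image)
qed

lemma contraction_constants:
  obtains C t where "C > 0" "0 < t" "t < 1"
    "\<And>n x. x \<in> Ep \<Longrightarrow> norm ((T ^^ n) x) \<le> C * t ^ n * norm x"
    "\<And>n x. x \<in> Em \<Longrightarrow> norm ((S ^^ n) x) \<le> C * t ^ n * norm x"
proof -
  obtain C1 t1 where C1: "C1 > 0" "0 < t1" "t1 < 1"
    "\<And>n x. x \<in> Ep \<Longrightarrow> norm ((T ^^ n) x) \<le> C1 * t1 ^ n * norm x"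
    using split by (auto simp: gen_hyperbolic_split_def uniform_contraction_on_def)
  obtain C2 t2 where C2: "C2 > 0" "0 < t2" "t2 < 1"
    "\<And>n x. x \<in> Em \<Longrightarrow> norm ((S ^^ n) x) \<le> C2 * t2 ^ n * norm x"
    using split by (auto simp: gen_hyperbolic_split_def uniform_contraction_on_def)
  have weaken: "c * r ^ n * norm x \<le> max C1 C2 * max t1 t2 ^ n * norm x"
    if "0 < c" "0 < r" "c \<le> max C1 C2" "r \<le> max t1 t2" for c r n x
    using that by (intro mult_right_mono mult_mono power_mono) auto
  show ?thesis
  proof (rule that[of "max C1 C2" "max t1 t2"])
    show "norm ((T ^^ n) x) \<le> max C1 C2 * max t1 t2 ^ n * norm x" if "x \<in> Ep" for n x
      using C1(4)[OF that, of n] weaken[of C1 t1 n x] C1 by linarith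
    show "norm ((S ^^ n) x) \<le> max C1 C2 * max t1 t2 ^ n * norm x" if "x \<in> Em" for n x
      using C2(4)[OF that, of n] weaken[of C2 t2 n x] C2 by linarith
  qed (use C1 C2 in auto)
qed

lemma trapped_set_subset_bset: "trapped_set T Em Ep k m \<subseteq> bset_of T"
proof
  fix y assume "y \<in> trapped_set T Em Ep k m"
  then have y: "(T ^^ k) y \<in> Ep" "(S ^^ m) y \<in> Em"
    by (simp_all add: trapped_set_def)
  obtain C t where Ct: "C > 0" "0 < t" "t < 1"
    "\<And>n x. x \<in> Ep \<Longrightarrow> norm ((T ^^ n) x) \<le> C * t ^ n * norm x"
    "\<And>n x. x \<in> Em \<Longrightarrow> norm ((S ^^ n) x) \<le> C * t ^ n * norm x"
    using contraction_constants by blast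
  have shrink: "C * t ^ n * norm z \<le> C * norm z" for n z
    using Ct by (intro mult_right_mono) (auto intro: mult_left_le power_le_one)
  define K where "K = C * norm ((T ^^ k) y) + C * norm ((S ^^ m) y) + 1"
  define k' where "k' n = n + k + 1" for n
  define m' where "m' n = n + m + 1" for n
  have "norm ((T ^^ k' n) y) < K" for n
  proof -
    have "(T ^^ k' n) y = (T ^^ (n + 1)) ((T ^^ k) y)"
      by (simp add: k'_def funpow_add)
    then show ?thesis
      using Ct(4)[OF y(1), of "n + 1"] shrink[of "n + 1"] Ct(1)
      unfolding K_def by (smt (verit) mult_nonneg_nonneg norm_ge_zero)
  qed
  moreover have "norm ((S ^^ m' n) y) < K" for n
  proof -
    have "(S ^^ m' n) y = (S ^^ (n + 1)) ((S ^^ m) y)"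
      by (simp add: m'_def funpow_add)
    then show ?thesis
      using Ct(5)[OF y(2), of "n + 1"] shrink[of "n + 1"] Ct(1)
      unfolding K_def by (smt (verit) mult_nonneg_nonneg norm_ge_zero)
  qed
  moreover have "K > 0" "strict_mono k'" "strict_mono m'" "k' 0 > 0" "m' 0 > 0"
    using Ct(1) by (auto simp: K_def k'_def m'_def strict_mono_def add_nonneg_pos)
  ultimately show "y \<in> bset_of T"
    unfolding bset_of_def by blast
qed

lemma correction_in_trapped_set:
  assumes "u \<in> Em" "w \<in> Ep" "(T ^^ a) x - u \<in> Ep" "(S ^^ b) x - w \<in> Em"
  shows "x - ((S ^^ a) u + (T ^^ b) w) \<in> trapped_set T Em Ep a b"
proof -
  have "(T ^^ a) (x - ((S ^^ a) u + (T ^^ b) w)) = ((T ^^ a) x - u) - (T ^^ (a + b)) w"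
    by (simp add: linear_diff[OF linear_iterates(1)] linear_add[OF linear_iterates(1)]
        iterates_cancel(2) funpow_add)
  moreover have "(S ^^ b) (x - ((S ^^ a) u + (T ^^ b) w)) = ((S ^^ b) x - w) - (S ^^ (b + a)) u"
    by (simp add: linear_diff[OF linear_iterates(2)] linear_add[OF linear_iterates(2)]
        iterates_cancel(1) funpow_add)
  ultimately show ?thesis
    using assms iterates_mem subspaces(1,2) by (simp add: trapped_set_def subspace_diff)
qed

lemma exists_trapped_point_near:
  obtains D t where "D \<ge> 0" "0 < t" "t < 1"
    "\<And>x a b. \<exists>y \<in> trapped_set T Em Ep a b.
       dist y x \<le> D * (t ^ a * norm ((T ^^ a) x) + t ^ b * norm ((S ^^ b) x))"
proof -
  obtain C t where Ct: "C > 0" "0 < t" "t < 1"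
    "\<And>n x. x \<in> Ep \<Longrightarrow> norm ((T ^^ n) x) \<le> C * t ^ n * norm x"
    "\<And>n x. x \<in> Em \<Longrightarrow> norm ((S ^^ n) x) \<le> C * t ^ n * norm x"
    using contraction_constants by blast
  obtain M where "M > 0" and decomp:
    "\<And>x. \<exists>u\<in>Em. \<exists>s\<in>Ep. x = u + s \<and> norm u \<le> M * norm x \<and> norm s \<le> M * norm x"
    using bounded_decomposition[OF subspaces(1-4,6)] by blast
  have "\<exists>y \<in> trapped_set T Em Ep a b.
      dist y x \<le> C * M * (t ^ a * norm ((T ^^ a) x) + t ^ b * norm ((S ^^ b) x))" for x a b
  proof -
    obtain u s where us: "u \<in> Em" "s \<in> Ep" "(T ^^ a) x = u + s" "norm u \<le> M * norm ((T ^^ a) x)"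
      using decomp by blast
    obtain v w where vw: "v \<in> Em" "w \<in> Ep" "(S ^^ b) x = v + w" "norm w \<le> M * norm ((S ^^ b) x)"
      using decomp by blast
    have "norm ((S ^^ a) u) \<le> C * t ^ a * (M * norm ((T ^^ a) x))"
      using Ct(1,2) by (intro order_trans[OF Ct(5)[OF us(1)]] mult_left_mono us(4)) simp
    moreover have "norm ((T ^^ b) w) \<le> C * t ^ b * (M * norm ((S ^^ b) x))"
      using Ct(1,2) by (intro order_trans[OF Ct(4)[OF vw(2)]] mult_left_mono vw(4)) simp
    moreover have "dist (x - ((S ^^ a) u + (T ^^ b) w)) x = norm ((S ^^ a) u + (T ^^ b) w)"
      using norm_minus_cancel[of "(S ^^ a) u + (T ^^ b) w"] by (simp add: dist_norm)
    ultimately have "dist (x - ((S ^^ a) u + (T ^^ b) w)) x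
        \<le> C * M * (t ^ a * norm ((T ^^ a) x) + t ^ b * norm ((S ^^ b) x))"
      using norm_triangle_ineq[of "(S ^^ a) u" "(T ^^ b) w"] by (simp add: algebra_simps)
    moreover have "x - ((S ^^ a) u + (T ^^ b) w) \<in> trapped_set T Em Ep a b"
      using us vw by (intro correction_in_trapped_set) auto
    ultimately show ?thesis
      by blast
  qed
  with Ct \<open>M > 0\<close> show ?thesis
    by (intro that[of "C * M" t]) auto
qed

lemma bset_subset_closure_trapped: "bset_of T \<subseteq> closure (\<Union>k. \<Union>m. trapped_set T Em Ep k m)"
proof
  fix x assume "x \<in> bset_of T"
  then obtain K and k m :: "nat \<Rightarrow> nat" where K: "strict_mono k" "strict_mono m"
      "\<And>n. norm ((T ^^ k n) x) < K" "\<And>n. norm ((S ^^ m n) x) < K"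
    unfolding bset_of_def mem_Collect_eq by auto
  obtain D t where Dt: "D \<ge> 0" "0 < t" "t < 1"
    "\<And>x a b. \<exists>y \<in> trapped_set T Em Ep a b.
       dist y x \<le> D * (t ^ a * norm ((T ^^ a) x) + t ^ b * norm ((S ^^ b) x))"
    using exists_trapped_point_near by blast
  then have "\<forall>n. \<exists>z. z \<in> trapped_set T Em Ep (k n) (m n) \<and>
      dist z x \<le> D * (t ^ k n * norm ((T ^^ k n) x) + t ^ m n * norm ((S ^^ m n) x))"
    by blast
  from choice[OF this] obtain y where "\<forall>n. y n \<in> trapped_set T Em Ep (k n) (m n) \<and>
      dist (y n) x \<le> D * (t ^ k n * norm ((T ^^ k n) x) + t ^ m n * norm ((S ^^ m n) x))" ..
  then have y: "\<And>n. y n \<in> trapped_set T Em Ep (k n) (m n)"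
    "\<And>n. dist (y n) x \<le> D * (t ^ k n * norm ((T ^^ k n) x) + t ^ m n * norm ((S ^^ m n) x))"
    by simp_all
  have dist_le: "dist (y n) x \<le> 2 * D * K * t ^ n" for n
  proof -
    have "t ^ k n \<le> t ^ n" "t ^ m n \<le> t ^ n"
      using Dt(2,3) by (simp_all add: power_decreasing seq_suble[OF K(1)] seq_suble[OF K(2)])
    then have "t ^ k n * norm ((T ^^ k n) x) + t ^ m n * norm ((S ^^ m n) x) \<le> t ^ n * K + t ^ n * K"
      using K(3,4)[of n] Dt(2) by (intro add_mono mult_mono) auto
    from mult_left_mono[OF this Dt(1)] y(2)[of n] show ?thesis
      by (simp add: algebra_simps)
  qed
  have "(\<lambda>n. 2 * D * K * t ^ n) \<longlonglongrightarrow> 0"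
    by (rule tendsto_mult_right_zero, rule LIMSEQ_power_zero) (use Dt(2,3) in simp)
  then have "(\<lambda>n. dist (y n) x) \<longlonglongrightarrow> 0"
    by (rule Lim_null_comparison[OF always_eventually, rotated]) (use dist_le in simp)
  then have "y \<longlonglongrightarrow> x"
    by (rule tendsto_dist_iff[THEN iffD2])
  moreover have "y n \<in> (\<Union>k. \<Union>m. trapped_set T Em Ep k m)" for n
    using y(1) by blast
  ultimately show "x \<in> closure (\<Union>k. \<Union>m. trapped_set T Em Ep k m)"
    unfolding closure_sequential by blast
qed

end

theorem mainTheorem20:
  fixes T :: "'a::banach \<Rightarrow> 'a" and Em Ep :: "'a set"
  assumes "is_aut T"
    and "shifted_hyperbolic_split T Em Ep"
    and "separable_space (subtopology euclidean (transition_subspace T Em Ep))"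
  shows "separable_space (subtopology euclidean (closure (bset_of T)))"
proof -
  interpret hyperbolic_automorphism T Em Ep
    using assms(1,2) by unfold_locales (simp_all add: shifted_hyperbolic_split_def)
  define U where "U = (\<Union>k. \<Union>m. trapped_set T Em Ep k m)"
  have "separable_set U"
    unfolding U_def using assms(3)
    by (intro separable_set_UN separable_trapped_set) (simp_all add: separable_space_top_of_set_iff)
  moreover have "closure (bset_of T) = closure U"
  proof
    show "closure (bset_of T) \<subseteq> closure U"
      using bset_subset_closure_trapped unfolding U_def by (simp add: closure_minimal)
    show "closure U \<subseteq> closure (bset_of T)"
      using trapped_set_subset_bset unfolding U_def by (intro closure_mono) blast
  qed
  ultimately show ?thesis
    by (simp add: separable_space_top_of_set_iff separable_set_closure)
qed

end
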